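(* Let $N$ be a probabilistic algorithmic knowledge structure, $i$ an agent, and $\phi$ a formula containing no occurrence of any $X_j$ operator. If $\mathtt{A}_i$ respects negation, is $\phi$-complete, and is $(\alpha,\beta)$-reliable for $\phi$ in $N$, then $\mathtt{A}_i$ is $(\alpha,\beta)$-reliable for $\phi$ in $N$ if and only if $\mathtt{A}_i$ is $(1-\beta,1-\alpha)$-reliable for $\neg\phi$ in $N$.
   Context: A derandomizer is $v=(v_1,\dots,v_n)$ with each $v_i$ a sequence of coin-toss outcomes; $V$ is the set of derandomizers. A probabilistic algorithmic knowledge structure is $N=(S,\pi,L_1,\dots,L_n,\mathtt{A}^d_1,\dots,\mathtt{A}^d_n,\nu)$ with states $S$, truth assignments $\pi(s)$ to primitive propositions, local-state functions $L_i$, deterministic functions $\mathtt{A}^d_i(\phi,\ell,s,v_i)\in\{$"Yes","No","?"$\}$ (derandomized version of agent $i$'s knowledge algorithm $\mathtt{A}_i$), and a probability distribution $\nu$ on $V$ such that each answer set $\{v:\mathtt{A}^d_i(\phi,L_i(s),s,v_i)=a\}$ is nonempty iff it has positive $\nu$-probability. Semantics at pairs $(s,v)$: primitive propositions via $\pi$, $\neg,\wedge$ usual, $(N,s,v)\models K_i\phi$ iff $(N,t,v')\models\phi$ for all $v'$ and all $t$ with $L_i(t)=L_i(s)$, $(N,s,v)\models X_i\phi$ iff $\mathtt{A}^d_i(\phi,L_i(s),s,v_i)=$"Yes", $(N,s,v)\models\Pr(\phi)\ge\alpha$ iff $\nu(\{v':(N,s,v')\models\phi\})\ge\alpha$. For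 a formula $\psi$ and state $s$, $\mu_{s,\psi}(\mathit{ob})=\nu(\{v':\mathtt{A}^d_i(\psi,L_i(s),s,v'_i)=\mathit{ob}\})$. For $\alpha,\beta\in[0,1]$, $\mathtt{A}_i$ is $(\alpha,\beta)$-reliable for $\psi$ in $N$ if for all $s,v$: $(N,s,v)\models\psi$ implies $\mu_{s,\psi}($"Yes"$)\ge\alpha$, and $(N,s,v)\models\neg\psi$ implies $\mu_{s,\psi}($"Yes"$)\le\beta$. $\mathtt{A}_i$ is $\phi$-complete if $\mathtt{A}^d_i(\phi,L_i(s),s,v_i)\in\{$"Yes","No"$\}$ for all $s,v$. $\mathtt{A}_i$ weakly respects negation if for all $\psi,\ell,s,v$: $\mathtt{A}^d_i(\neg\psi,\ell,s,v_i)$ is "Yes" when $\mathtt{A}^d_i(\psi,\ell,s,v_i)=$"No", "No" when it is "Yes", and "?" when it is "?"; it strongly respects negation if $\mathtt{A}^d_i(\neg\psi,\ell,s,v_i)$ is "Yes" when $\mathtt{A}^d_i(\psi,\ell,s,v_i)\neq$"Yes" and "No" when it is "Yes"; it respects negation if it weakly or strongly respects negation. *)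

theory Defs
  imports "HOL-Probability.Probability"
begin

datatype answer = Yes | No | Unk

datatype ('p, 'ag) fm =
    Prop 'p
  | Neg "('p, 'ag) fm"
  | Conj "('p, 'ag) fm" "('p, 'ag) fm"
  | Kn 'ag "('p, 'ag) fm"
  | Xn 'ag "('p, 'ag) fm"
  | PrGe "('p, 'ag) fm" real

text \<open>States are the elements of type 's;
  agents are the elements of type 'ag; a derandomizer is a function assigning to each agent
  its coin-toss sequence (of type 'c); nu is a distribution on derandomizers.\<close>
record ('s, 'p, 'l, 'ag, 'c) pak =
  pi :: "'s \<Rightarrow> 'p \<Rightarrow> bool"
  Lf :: "'ag \<Rightarrow> 's \<Rightarrow> 'l"
  Ad :: "'ag \<Rightarrow> ('p, 'ag) fm \<Rightarrow> 'l \<Rightarrow> 's \<Rightarrow> 'c \<Rightarrow> answer"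
  nu :: "('ag \<Rightarrow> 'c) measure"

definition is_pak :: "('s, 'p, 'l, 'ag, 'c) pak \<Rightarrow> bool" where
  "is_pak N \<longleftrightarrow> prob_space (nu N) \<and> space (nu N) = UNIV \<and> sets (nu N) = UNIV \<and>
     (\<forall>i phi s a. {v. Ad N i phi (Lf N i s) s (v i) = a} \<noteq> {} \<longleftrightarrow>
                  measure (nu N) {v. Ad N i phi (Lf N i s) s (v i) = a} > 0)"

primrec sat :: "('s, 'p, 'l, 'ag, 'c) pak \<Rightarrow> 's \<Rightarrow> ('ag \<Rightarrow> 'c) \<Rightarrow> ('p, 'ag) fm \<Rightarrow> bool" where
  "sat N s v (Prop p) = pi N s p"
| "sat N s v (Neg f) = (\<not> sat N s v f)"
| "sat N s v (Conj f g) = (sat N s v f \<and> sat N s v g)"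
| "sat N s v (Kn i f) = (\<forall>t v'. Lf N i t = Lf N i s \<longrightarrow> sat N t v' f)"
| "sat N s v (Xn i f) = (Ad N i f (Lf N i s) s (v i) = Yes)"
| "sat N s v (PrGe f a) = (measure (nu N) {v'. sat N s v' f} \<ge> a)"

primrec noX :: "('p, 'ag) fm \<Rightarrow> bool" where
  "noX (Prop p) = True"
| "noX (Neg f) = noX f"
| "noX (Conj f g) = (noX f \<and> noX g)"
| "noX (Kn i f) = noX f"
| "noX (Xn i f) = False"
| "noX (PrGe f a) = noX f"

definition mu :: "('s, 'p, 'l, 'ag, 'c) pak \<Rightarrow> 'ag \<Rightarrow> 's \<Rightarrow> ('p, 'ag) fm \<Rightarrow> answer \<Rightarrow> real" where
  "mu N i s psi ob = measure (nu N) {v'. Ad N i psi (Lf N i s) s (v' i) = ob}"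

definition reliable :: "('s, 'p, 'l, 'ag, 'c) pak \<Rightarrow> 'ag \<Rightarrow> real \<Rightarrow> real \<Rightarrow> ('p, 'ag) fm \<Rightarrow> bool" where
  "reliable N i \<alpha> \<beta> psi \<longleftrightarrow>
     (\<forall>s v. (sat N s v psi \<longrightarrow> mu N i s psi Yes \<ge> \<alpha>) \<and>
            (sat N s v (Neg psi) \<longrightarrow> mu N i s psi Yes \<le> \<beta>))"

definition phi_complete :: "('s, 'p, 'l, 'ag, 'c) pak \<Rightarrow> 'ag \<Rightarrow> ('p, 'ag) fm \<Rightarrow> bool" where
  "phi_complete N i phi \<longleftrightarrow> (\<forall>s v. Ad N i phi (Lf N i s) s (v i) \<in> {Yes, No})"

definition weakly_respects_neg :: "('s, 'p, 'l, 'ag, 'c) pak \<Rightarrow> 'ag \<Rightarrow> bool" where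
  "weakly_respects_neg N i \<longleftrightarrow> (\<forall>psi l s (v::'ag \<Rightarrow> 'c).
     (Ad N i psi l s (v i) = No \<longrightarrow> Ad N i (Neg psi) l s (v i) = Yes) \<and>
     (Ad N i psi l s (v i) = Yes \<longrightarrow> Ad N i (Neg psi) l s (v i) = No) \<and>
     (Ad N i psi l s (v i) = Unk \<longrightarrow> Ad N i (Neg psi) l s (v i) = Unk))"

definition strongly_respects_neg :: "('s, 'p, 'l, 'ag, 'c) pak \<Rightarrow> 'ag \<Rightarrow> bool" where
  "strongly_respects_neg N i \<longleftrightarrow> (\<forall>psi l s (v::'ag \<Rightarrow> 'c).
     (Ad N i psi l s (v i) \<noteq> Yes \<longrightarrow> Ad N i (Neg psi) l s (v i) = Yes) \<and>
     (Ad N i psi l s (v i) = Yes \<longrightarrow> Ad N i (Neg psi) l s (v i) = No))"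

definition respects_neg :: "('s, 'p, 'l, 'ag, 'c) pak \<Rightarrow> 'ag \<Rightarrow> bool" where
  "respects_neg N i \<longleftrightarrow> weakly_respects_neg N i \<or> strongly_respects_neg N i"

end

theory Submission
  imports Defs
begin

text \<open>On a \<open>phi\<close>-complete algorithm that respects negation, the answer to \<open>Neg phi\<close> is Yes
  exactly when the answer to \<open>phi\<close> is not Yes. Hence \<open>mu_{s,Neg phi}(Yes) = 1 - mu_{s,phi}(Yes)\<close>,
  and since \<open>Neg (Neg phi)\<close> holds iff \<open>phi\<close> does, the two reliability conditions swap into
  each other.\<close>

lemma Ad_Neg_Yes_iff:
  assumes "respects_neg N i" and "Ad N i phi l s (v i) \<in> {Yes, No}"
  shows "Ad N i (Neg phi) l s (v i) = Yes \<longleftrightarrow> Ad N i phi l s (v i) \<noteq> Yes"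
  using assms
  unfolding respects_neg_def weakly_respects_neg_def strongly_respects_neg_def
  by (metis answer.distinct(1) insertE singletonD)

lemma mu_Neg_Yes:
  assumes "is_pak N" "respects_neg N i" "phi_complete N i phi"
  shows "mu N i s (Neg phi) Yes = 1 - mu N i s phi Yes"
proof -
  interpret prob_space "nu N"
    using assms(1) by (simp add: is_pak_def)
  have sets_nu: "sets (nu N) = UNIV" and space_nu: "space (nu N) = UNIV"
    using assms(1) by (simp_all add: is_pak_def)
  let ?Yes = "{v. Ad N i phi (Lf N i s) s (v i) = Yes}"
  have "{v. Ad N i (Neg phi) (Lf N i s) s (v i) = Yes} = space (nu N) - ?Yes"
    using Ad_Neg_Yes_iff[OF assms(2)] assms(3) space_nu
    by (auto simp: phi_complete_def)
  then show ?thesis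
    using prob_compl[of ?Yes] by (simp add: mu_def sets_nu)
qed

lemma reliable_Neg_iff:
  assumes "is_pak N" "respects_neg N i" "phi_complete N i phi"
  shows "reliable N i \<alpha> \<beta> phi \<longleftrightarrow> reliable N i (1 - \<beta>) (1 - \<alpha>) (Neg phi)"
  using mu_Neg_Yes[OF assms] unfolding reliable_def by auto

theorem proposition5p4:
  fixes N :: "('s, 'p, 'l, 'ag, 'c) pak" and i :: 'ag and phi :: "('p, 'ag) fm"
    and \<alpha> \<beta> :: real
  assumes "is_pak N"
    and "noX phi"
    and "\<alpha> \<in> {0..1}" and "\<beta> \<in> {0..1}"
    and "respects_neg N i"
    and "phi_complete N i phi"
    and "reliable N i \<alpha> \<beta> phi"
  shows "reliable N i \<alpha> \<beta> phi \<longleftrightarrow> reliable N i (1 - \<beta>) (1 - \<alpha>) (Neg phi)"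
  using reliable_Neg_iff[OF assms(1,5,6)] .

end
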